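(* Let $H_n$ be the pyrene system with $n$ pyrene fragments. Then $$\lim_{n\to\infty}\frac{IDF(H_n)}{n\,\Phi(H_n)}=1+\frac{\sqrt{2}}{2}.$$
   Context: Pyrene system: draw the hexagonal lattice so that every hexagon has two vertical sides; horizontally adjacent hexagons then share a vertical edge. For $n\ge1$, $H_n$ is the hexagonal system (the plane graph formed by the vertices and edges of the following $4n$ hexagons) consisting of a horizontal linear row of $2n$ hexagons $h_{1,1},h_{1,2},\dots,h_{n,1},h_{n,2}$, consecutive ones sharing a vertical edge, together with, for each $i$, a hexagon $s_{i,1}$ directly above and a hexagon $s_{i,2}$ directly below the common edge of $h_{i,1}$ and $h_{i,2}$ (each sharing an edge with both $h_{i,1}$ and $h_{i,2}$). $\Phi(G)$ is the number of perfect matchings of $G$. For a perfect matching $M$ of $G$, a forcing set is a subset $S\subseteq M$ contained in no other perfect matching of $G$, and the forcing number $f(G,M)$ is the minimum size of a forcing set. The degree of freedom $IDF(G)$ is $\sum_{M}f(G,M)$, summed over all perfect matchings $M$ of $G$. *)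

theory Defs
  imports Complex_Main
begin

text \<open>Coordinates are scaled:
 a hexagon with centre (a,b) (x scaled by 2/sqrt 3, y by 2) has the six vertices
 (a-1,b-1),(a-1,b+1),(a,b+2),(a+1,b+1),(a+1,b-1),(a,b-2) in cyclic order.
 Horizontally adjacent hexagons have centres differing by (2,0) and share a vertical edge.\<close>

type_synonym vert = "int \<times> int"

definition hex_cycle :: "int \<times> int \<Rightarrow> vert list" where
  "hex_cycle c = (case c of (a,b) \<Rightarrow>
     [(a-1,b-1),(a-1,b+1),(a,b+2),(a+1,b+1),(a+1,b-1),(a,b-2)])"

definition hex_vertices :: "int \<times> int \<Rightarrow> vert set" where
  "hex_vertices c = set (hex_cycle c)"

definition hex_edges :: "int \<times> int \<Rightarrow> vert set set" where
  "hex_edges c = (let vs = hex_cycle c in {{vs ! i, vs ! ((i+1) mod 6)} | i. i < 6})"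

text \<open>Hexagon centres of the pyrene system H_n:
 h_{i,1} = (4i-4,0), h_{i,2} = (4i-2,0) (common vertical edge on x = 4i-3),
 s_{i,1} = (4i-3,3) directly above, s_{i,2} = (4i-3,-3) directly below that edge.\<close>

definition pyrene_hexagons :: "nat \<Rightarrow> (int \<times> int) set" where
  "pyrene_hexagons n = (\<Union>i\<in>{1..n}.
     {(4*int i-4, 0), (4*int i-2, 0), (4*int i-3, 3), (4*int i-3, -3)})"

definition pyrene_V :: "nat \<Rightarrow> vert set" where
  "pyrene_V n = (\<Union>c\<in>pyrene_hexagons n. hex_vertices c)"

definition pyrene_E :: "nat \<Rightarrow> vert set set" where
  "pyrene_E n = (\<Union>c\<in>pyrene_hexagons n. hex_edges c)"

definition perfect_matchings :: "'a set \<Rightarrow> 'a set set \<Rightarrow> 'a set set set" where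
  "perfect_matchings V E = {M. M \<subseteq> E \<and> (\<forall>v\<in>V. \<exists>!e. e \<in> M \<and> v \<in> e)}"

definition forcing_set :: "'a set \<Rightarrow> 'a set set \<Rightarrow> 'a set set \<Rightarrow> 'a set set \<Rightarrow> bool" where
  "forcing_set V E M S \<longleftrightarrow> S \<subseteq> M \<and>
     (\<forall>M'\<in>perfect_matchings V E. S \<subseteq> M' \<longrightarrow> M' = M)"

definition forcing_number :: "'a set \<Rightarrow> 'a set set \<Rightarrow> 'a set set \<Rightarrow> nat" where
  "forcing_number V E M = Min {card S | S. forcing_set V E M S}"

definition Phi :: "'a set \<Rightarrow> 'a set set \<Rightarrow> nat" where
  "Phi V E = card (perfect_matchings V E)"

definition IDF :: "'a set \<Rightarrow> 'a set set \<Rightarrow> nat" where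
  "IDF V E = (\<Sum>M\<in>perfect_matchings V E. forcing_number V E M)"

end

theory Submission
  imports Defs "HOL-Library.Disjoint_Sets"
begin

(* Cut H_n along its n + 1 vertical rungs. In a perfect matching the two ends of a rung are
   matched alike: by the rung itself, or both into the unit on its left, or both into the unit on
   its right. Hence a perfect matching is the same as a word over six letters -- four inner states
   of a unit and two links -- in which no right link is directly followed by a left link.
   The key edges of a unit (two for an inner state, one for a link) form a forcing set, and
   flipping one unit at one key edge gives perfect matchings whose differences from the given one
   are pairwise disjoint, so the forcing number is exactly the weight of the word (2 per inner
   letter, 1 per link). Splitting words by their first letter, Phi(H_n) = a_n satisfies
   a_(n+2) = 6 a_(n+1) - a_n and IDF(H_n) an inhomogeneous version of it with the particular
   solution n (a_n + a_(n+1)) / 4. With dominant root 3 + 2 sqrt 2 this gives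
   IDF(H_n) / (n Phi(H_n)) --> (1 + 3 + 2 sqrt 2) / 4 = 1 + sqrt 2 / 2. *)

section \<open>Perfect matchings and forcing sets\<close>

definition exactly_one :: "bool \<Rightarrow> bool \<Rightarrow> bool \<Rightarrow> bool" where
  "exactly_one a b c \<longleftrightarrow> (a \<or> b \<or> c) \<and> \<not> (a \<and> b) \<and> \<not> (a \<and> c) \<and> \<not> (b \<and> c)"

lemma ex1_edge_at_iff_exactly_one:
  assumes "M \<subseteq> E" "{e \<in> E. v \<in> e} \<subseteq> {a, b, c}"
    and "v \<in> a" "v \<in> b" "v \<in> c" "distinct [a, b, c]"
  shows "(\<exists>!e. e \<in> M \<and> v \<in> e) \<longleftrightarrow> exactly_one (a \<in> M) (b \<in> M) (c \<in> M)"
proof -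
  have "a \<noteq> b" "a \<noteq> c" "b \<noteq> c"
    using assms(6) by auto
  with assms(1-5) show ?thesis
    unfolding exactly_one_def by blast
qed

lemma ex1_edge_at_iff_xor:
  assumes "M \<subseteq> E" "{e \<in> E. v \<in> e} \<subseteq> {a, b}"
    and "v \<in> a" "v \<in> b" "a \<noteq> b"
  shows "(\<exists>!e. e \<in> M \<and> v \<in> e) \<longleftrightarrow> (a \<in> M) \<noteq> (b \<in> M)"
  using assms by blast

lemma perfect_matchings_subset: "M \<in> perfect_matchings V E \<Longrightarrow> M \<subseteq> E"
  unfolding perfect_matchings_def by blast

lemma card_le_if_meets_disjoint_family:
  assumes "finite S" "\<And>j. j \<in> J \<Longrightarrow> S \<inter> X j \<noteq> {}" "disjoint_family_on X J"
  shows "card J \<le> card S"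
proof -
  have "\<forall>j\<in>J. \<exists>e. e \<in> S \<inter> X j"
    using assms(2) by blast
  then obtain f where f: "\<And>j. j \<in> J \<Longrightarrow> f j \<in> S \<inter> X j"
    by (metis bchoice)
  have "inj_on f J"
  proof (rule inj_onI)
    fix j j' assume "j \<in> J" "j' \<in> J" "f j = f j'"
    then have "f j \<in> X j \<inter> X j'"
      using f by (metis IntD2 IntI)
    then show "j = j'"
      using assms(3) \<open>j \<in> J\<close> \<open>j' \<in> J\<close> unfolding disjoint_family_on_def by blast
  qed
  moreover have "f ` J \<subseteq> S"
    using f by blast
  ultimately show ?thesis
    using assms(1) by (rule card_inj_on_le)
qed

lemma forcing_set_card_ge:
  assumes S: "forcing_set V E M S" and "finite M"
    and N: "\<And>j. j \<in> J \<Longrightarrow> N j \<in> perfect_matchings V E" "\<And>j. j \<in> J \<Longrightarrow> N j \<noteq> M"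
    and disj: "disjoint_family_on (\<lambda>j. M - N j) J"
  shows "card J \<le> card S"
proof (rule card_le_if_meets_disjoint_family[OF _ _ disj])
  show "finite S"
    using S \<open>finite M\<close> unfolding forcing_set_def by (auto intro: finite_subset)
  show "S \<inter> (M - N j) \<noteq> {}" if "j \<in> J" for j
    using S N[OF that] unfolding forcing_set_def by blast
qed

lemma forcing_number_eqI:
  assumes "finite M" "forcing_set V E M S"
    and "\<And>S'. forcing_set V E M S' \<Longrightarrow> card S \<le> card S'"
  shows "forcing_number V E M = card S"
  unfolding forcing_number_def
proof (rule Min_eqI)
  have "{card S | S. forcing_set V E M S} \<subseteq> card ` Pow M"
    unfolding forcing_set_def by blast
  moreover have "finite (card ` Pow M)"
    using assms(1) by simp
  ultimately show "finite {card S | S. forcing_set V E M S}"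
    by (rule finite_subset)
qed (use assms in auto)

section \<open>Linear recurrences of order two\<close>

lemma linear_recurrence_closed_form:
  fixes y :: "nat \<Rightarrow> 'a::field"
  assumes rec: "\<And>n. y (Suc (Suc n)) = (l + m) * y (Suc n) - l * m * y n" and "l \<noteq> m"
  shows "y n = ((y 1 - m * y 0) * l ^ n + (l * y 0 - y 1) * m ^ n) / (l - m)"
proof -
  define p where "p n = (y 1 - m * y 0) * l ^ n + (l * y 0 - y 1) * m ^ n" for n
  have "(l - m) * y n = p n \<and> (l - m) * y (Suc n) = p (Suc n)"
  proof (induction n)
    case 0
    show ?case
      unfolding p_def by (simp add: algebra_simps)
  next
    case (Suc n)
    have "(l - m) * y (Suc (Suc n)) = (l + m) * ((l - m) * y (Suc n)) - l * m * ((l - m) * y n)"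
      unfolding rec by (simp add: algebra_simps)
    also have "\<dots> = (l + m) * p (Suc n) - l * m * p n"
      using Suc.IH by simp
    also have "\<dots> = p (Suc (Suc n))"
      unfolding p_def by (simp add: algebra_simps)
    finally show ?case
      using Suc.IH by blast
  qed
  then show ?thesis
    using \<open>l \<noteq> m\<close> unfolding p_def by (simp add: field_simps)
qed

lemma linear_recurrence_tendsto:
  fixes y :: "nat \<Rightarrow> real"
  assumes rec: "\<And>n. y (Suc (Suc n)) = (l + m) * y (Suc n) - l * m * y n" and "\<bar>m\<bar> < l"
  shows "(\<lambda>n. y n / l ^ n) \<longlonglongrightarrow> (y 1 - m * y 0) / (l - m)"
proof -
  have "l \<noteq> m" "l > 0"
    using \<open>\<bar>m\<bar> < l\<close> by auto
  have "y n / l ^ n = ((y 1 - m * y 0) + (l * y 0 - y 1) * (m / l) ^ n) / (l - m)" for n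
    using linear_recurrence_closed_form[where y = y, OF rec \<open>l \<noteq> m\<close>, of n] \<open>l > 0\<close>
    by (simp add: field_simps power_divide)
  moreover have "norm (m / l) < 1"
    using \<open>\<bar>m\<bar> < l\<close> \<open>l > 0\<close> by (simp add: abs_divide)
  then have "(\<lambda>n. (m / l) ^ n) \<longlonglongrightarrow> 0"
    by (rule LIMSEQ_power_zero)
  then have "(\<lambda>n. ((y 1 - m * y 0) + (l * y 0 - y 1) * (m / l) ^ n) / (l - m))
      \<longlonglongrightarrow> ((y 1 - m * y 0) + (l * y 0 - y 1) * 0) / (l - m)"
    using \<open>l \<noteq> m\<close> by (intro tendsto_divide tendsto_add tendsto_mult tendsto_const) auto
  ultimately show ?thesis
    by simp
qed

lemma ratio_tendsto_if_normalized_tendsto: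
  fixes y :: "nat \<Rightarrow> real"
  assumes normalized: "(\<lambda>n. y n / l ^ n) \<longlonglongrightarrow> c" and "c \<noteq> 0" "l \<noteq> 0"
  shows "(\<lambda>n. y (Suc n) / y n) \<longlonglongrightarrow> l"
proof -
  have ratio: "(\<lambda>n. y (Suc n) / y n) = (\<lambda>n. l * (y (Suc n) / l ^ Suc n) / (y n / l ^ n))"
    using \<open>l \<noteq> 0\<close> by (intro ext) (simp add: field_simps)
  have "(\<lambda>n. l * (y (Suc n) / l ^ Suc n) / (y n / l ^ n)) \<longlonglongrightarrow> l * c / c"
    using normalized \<open>c \<noteq> 0\<close> by (intro tendsto_intros LIMSEQ_Suc[OF normalized])
  moreover have "l * c / c = l"
    using \<open>c \<noteq> 0\<close> by simp
  ultimately show ?thesis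
    unfolding ratio by simp
qed

section \<open>The pyrene system\<close>

text \<open>In the \<open>i\<close>-th unit \<open>h\<^sub>i\<^sub>,\<^sub>1, h\<^sub>i\<^sub>,\<^sub>2, s\<^sub>i\<^sub>,\<^sub>1, s\<^sub>i\<^sub>,\<^sub>2\<close> of \<open>H\<^sub>n\<close>, the vertices
  \<open>vtx A i, vtx T1 i, vtx T2 i, vtx T3 i, vtx C i\<close> lie from left to right on the top of
  \<open>s\<^sub>i\<^sub>,\<^sub>1\<close>, and \<open>vtx B i\<close> is the upper end of the edge shared by \<open>h\<^sub>i\<^sub>,\<^sub>1\<close> and \<open>h\<^sub>i\<^sub>,\<^sub>2\<close>; primed
  labels denote the mirror images in the horizontal axis. The vertical edge
  \<open>rung k = {vK k, vK' k}\<close> separates unit \<open>k\<close> from unit \<open>k + 1\<close>; \<open>rung 0\<close> and \<open>rung n\<close> are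
  the two ends of \<open>H\<^sub>n\<close>.\<close>

datatype label = A | T1 | T2 | T3 | B | C | A' | T1' | T2' | T3' | B' | C'

fun vtx :: "label \<Rightarrow> nat \<Rightarrow> vert" where
  "vtx A i = (4 * int i - 4, 2)"
| "vtx T1 i = (4 * int i - 4, 4)"
| "vtx T2 i = (4 * int i - 3, 5)"
| "vtx T3 i = (4 * int i - 2, 4)"
| "vtx B i = (4 * int i - 3, 1)"
| "vtx C i = (4 * int i - 2, 2)"
| "vtx A' i = (4 * int i - 4, -2)"
| "vtx T1' i = (4 * int i - 4, -4)"
| "vtx T2' i = (4 * int i - 3, -5)"
| "vtx T3' i = (4 * int i - 2, -4)"
| "vtx B' i = (4 * int i - 3, -1)"
| "vtx C' i = (4 * int i - 2, -2)"

declare vtx.simps [simp del]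

definition vK :: "nat \<Rightarrow> vert" where "vK k = (4 * int k - 1, 1)"
definition vK' :: "nat \<Rightarrow> vert" where "vK' k = (4 * int k - 1, -1)"

definition rung :: "nat \<Rightarrow> vert set" where
  "rung k = {vK k, vK' k}"

lemma UNIV_label: "(UNIV :: label set) = {A, T1, T2, T3, B, C, A', T1', T2', T3', B', C'}"
proof (rule UNIV_eq_I)
  fix a :: label
  show "a \<in> {A, T1, T2, T3, B, C, A', T1', T2', T3', B', C'}"
    by (cases a) simp_all
qed

lemma vtx_eq_iff [simp]: "vtx a i = vtx b j \<longleftrightarrow> a = b \<and> i = j"
  by (cases a; cases b; simp add: vtx.simps; presburger)

lemma vtx_neq_vK [simp]: "vtx a i \<noteq> vK k" "vtx a i \<noteq> vK' k" "vK k \<noteq> vtx a i" "vK' k \<noteq> vtx a i"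
  by (cases a; simp add: vtx.simps vK_def vK'_def; presburger)+

lemma vK_eq_iff [simp]:
  "vK k = vK l \<longleftrightarrow> k = l" "vK' k = vK' l \<longleftrightarrow> k = l" "vK k \<noteq> vK' l" "vK' k \<noteq> vK l"
  by (auto simp: vK_def vK'_def)

datatype edge_kind = KA | AT | T12 | T23 | T3C | AB | BC | CK
  | KA' | AT' | T12' | T23' | T3C' | AB' | BC' | CK' | BB'

fun unit_edge :: "edge_kind \<Rightarrow> nat \<Rightarrow> vert set" where
  "unit_edge KA i = {vK (i - 1), vtx A i}"
| "unit_edge AT i = {vtx A i, vtx T1 i}"
| "unit_edge T12 i = {vtx T1 i, vtx T2 i}"
| "unit_edge T23 i = {vtx T2 i, vtx T3 i}"
| "unit_edge T3C i = {vtx T3 i, vtx C i}"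
| "unit_edge AB i = {vtx A i, vtx B i}"
| "unit_edge BC i = {vtx B i, vtx C i}"
| "unit_edge CK i = {vtx C i, vK i}"
| "unit_edge KA' i = {vK' (i - 1), vtx A' i}"
| "unit_edge AT' i = {vtx A' i, vtx T1' i}"
| "unit_edge T12' i = {vtx T1' i, vtx T2' i}"
| "unit_edge T23' i = {vtx T2' i, vtx T3' i}"
| "unit_edge T3C' i = {vtx T3' i, vtx C' i}"
| "unit_edge AB' i = {vtx A' i, vtx B' i}"
| "unit_edge BC' i = {vtx B' i, vtx C' i}"
| "unit_edge CK' i = {vtx C' i, vK' i}"
| "unit_edge BB' i = {vtx B i, vtx B' i}"

lemma UNIV_edge_kind:
  "(UNIV :: edge_kind set) =
     {KA, AT, T12, T23, T3C, AB, BC, CK, KA', AT', T12', T23', T3C', AB', BC', CK', BB'}"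
proof (rule UNIV_eq_I)
  fix t :: edge_kind
  show "t \<in> {KA, AT, T12, T23, T3C, AB, BC, CK, KA', AT', T12', T23', T3C', AB', BC', CK', BB'}"
    by (cases t) simp_all
qed

lemma unit_edge_eq_iff: "unit_edge t i = unit_edge u j \<longleftrightarrow> t = u \<and> i = j"
  by (cases t; cases u; auto simp: doubleton_eq_iff)

lemma unit_edge_neq_rung: "unit_edge t i \<noteq> rung k"
  by (cases t; auto simp: doubleton_eq_iff rung_def)

lemma rung_eq_iff: "rung k = rung l \<longleftrightarrow> k = l"
  by (auto simp: doubleton_eq_iff rung_def)

lemmas edge_eq_simps = unit_edge_eq_iff unit_edge_neq_rung unit_edge_neq_rung[symmetric] rung_eq_iff

lemma hex_edges_of_cycle:
  assumes "hex_cycle c = [v0, v1, v2, v3, v4, v5]"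
  shows "hex_edges c = {{v0, v1}, {v1, v2}, {v2, v3}, {v3, v4}, {v4, v5}, {v5, v0}}"
proof -
  have "{f i | i. i < 6} = f ` {0, 1, 2, 3, 4, 5}" for f :: "nat \<Rightarrow> vert set"
    by (auto simp: numeral_eq_Suc less_Suc_eq)
  then show ?thesis
    unfolding hex_edges_def assms Let_def by simp
qed

definition unit_hexagons :: "nat \<Rightarrow> (int \<times> int) set" where
  "unit_hexagons i =
     {(4 * int i - 4, 0), (4 * int i - 2, 0), (4 * int i - 3, 3), (4 * int i - 3, -3)}"

lemma hex_cycles_of_unit:
  assumes "1 \<le> i"
  shows "hex_cycle (4 * int i - 4, 0) =
      [vK' (i - 1), vK (i - 1), vtx A i, vtx B i, vtx B' i, vtx A' i]"
    and "hex_cycle (4 * int i - 2, 0) = [vtx B' i, vtx B i, vtx C i, vK i, vK' i, vtx C' i]"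
    and "hex_cycle (4 * int i - 3, 3) = [vtx A i, vtx T1 i, vtx T2 i, vtx T3 i, vtx C i, vtx B i]"
    and "hex_cycle (4 * int i - 3, -3) =
      [vtx T1' i, vtx A' i, vtx B' i, vtx C' i, vtx T3' i, vtx T2' i]"
  using assms by (simp_all add: hex_cycle_def vtx.simps vK_def vK'_def of_nat_diff algebra_simps)

lemma unit_hexagon_edges:
  assumes "1 \<le> i"
  shows "(\<Union>c\<in>unit_hexagons i. hex_edges c) = {rung (i - 1), rung i} \<union> range (\<lambda>t. unit_edge t i)"
  unfolding unit_hexagons_def
  by (simp add: hex_edges_of_cycle hex_cycles_of_unit[OF assms] UNIV_edge_kind rung_def
      insert_commute)

lemma unit_hexagon_vertices:
  assumes "1 \<le> i"
  shows "(\<Union>c\<in>unit_hexagons i. hex_vertices c) =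
    {vK (i - 1), vK' (i - 1), vK i, vK' i} \<union> range (\<lambda>a. vtx a i)"
  unfolding unit_hexagons_def hex_vertices_def
  by (simp add: hex_cycles_of_unit[OF assms] UNIV_label insert_commute)

lemma pyrene_hexagons_eq: "pyrene_hexagons n = (\<Union>i\<in>{1..n}. unit_hexagons i)"
  unfolding pyrene_hexagons_def unit_hexagons_def ..

lemma pyrene_E_eq:
  "pyrene_E n = (\<Union>i\<in>{1..n}. {rung (i - 1), rung i} \<union> range (\<lambda>t. unit_edge t i))"
  unfolding pyrene_E_def pyrene_hexagons_eq UN_UN_flatten
  by (intro SUP_cong refl unit_hexagon_edges) simp

lemma UN_consecutive_eq_UN_atMost:
  fixes f :: "nat \<Rightarrow> 'a set"
  assumes "1 \<le> n"
  shows "(\<Union>i\<in>{1..n}. f (i - 1) \<union> f i) = (\<Union>k\<le>n. f k)"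
proof -
  have "{..n} = (\<lambda>i. i - 1) ` {1..n} \<union> {1..n}"
  proof (intro set_eqI iffI)
    fix k assume "k \<in> {..n}"
    then show "k \<in> (\<lambda>i. i - 1) ` {1..n} \<union> {1..n}"
      using assms by (cases "k = 0") (auto intro: image_eqI[where x = 1])
  qed auto
  then show ?thesis
    by (simp add: UN_Un_distrib)
qed

lemma pyrene_E_eq':
  assumes "1 \<le> n"
  shows "pyrene_E n = (\<Union>k\<le>n. {rung k}) \<union> (\<Union>i\<in>{1..n}. range (\<lambda>t. unit_edge t i))"
proof -
  have "pyrene_E n =
      (\<Union>i\<in>{1..n}. {rung (i - 1)} \<union> {rung i}) \<union> (\<Union>i\<in>{1..n}. range (\<lambda>t. unit_edge t i))"
    unfolding pyrene_E_eq UN_Un_distrib[symmetric] by (simp add: insert_commute)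
  then show ?thesis
    using UN_consecutive_eq_UN_atMost[OF assms, of "\<lambda>k. {rung k}"] by simp
qed

lemma pyrene_V_eq:
  assumes "1 \<le> n"
  shows "pyrene_V n = (\<Union>k\<le>n. {vK k, vK' k}) \<union> (\<Union>i\<in>{1..n}. range (\<lambda>a. vtx a i))"
proof -
  have "pyrene_V n = (\<Union>i\<in>{1..n}. {vK (i - 1), vK' (i - 1), vK i, vK' i} \<union> range (\<lambda>a. vtx a i))"
    unfolding pyrene_V_def pyrene_hexagons_eq UN_UN_flatten
    by (intro SUP_cong refl unit_hexagon_vertices) simp
  also have "\<dots> = (\<Union>i\<in>{1..n}. {vK (i - 1), vK' (i - 1)} \<union> {vK i, vK' i}) \<union>
      (\<Union>i\<in>{1..n}. range (\<lambda>a. vtx a i))"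
    unfolding UN_Un_distrib[symmetric] by (intro SUP_cong refl) auto
  finally show ?thesis
    using UN_consecutive_eq_UN_atMost[OF assms, of "\<lambda>k. {vK k, vK' k}"] by simp
qed

lemma rung_in_pyrene_E: "1 \<le> n \<Longrightarrow> k \<le> n \<Longrightarrow> rung k \<in> pyrene_E n"
  unfolding pyrene_E_eq' by auto

lemma unit_edge_in_pyrene_E_iff: "unit_edge t i \<in> pyrene_E n \<longleftrightarrow> 1 \<le> i \<and> i \<le> n"
  unfolding pyrene_E_eq by (auto simp: edge_eq_simps image_iff)

lemma finite_pyrene_E: "finite (pyrene_E n)"
  unfolding pyrene_E_eq by (simp add: UNIV_edge_kind)

lemma pyrene_E_iff:
  "e \<in> pyrene_E n \<longleftrightarrow> (\<exists>j\<in>{1..n}. e = rung (j - 1) \<or> e = rung j \<or> (\<exists>t. e = unit_edge t j))"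
  unfolding pyrene_E_eq by blast

lemma vK_in_unit_edge_iff:
  assumes "1 \<le> j"
  shows "vK k \<in> unit_edge t j \<longleftrightarrow> t = CK \<and> j = k \<or> t = KA \<and> j = Suc k"
    and "vK' k \<in> unit_edge t j \<longleftrightarrow> t = CK' \<and> j = k \<or> t = KA' \<and> j = Suc k"
  using assms by (induct t) auto

lemma vtx_in_unit_edge_iff:
  "vtx A i \<in> unit_edge t j \<longleftrightarrow> t \<in> {KA, AB, AT} \<and> j = i"
  "vtx T1 i \<in> unit_edge t j \<longleftrightarrow> t \<in> {AT, T12} \<and> j = i"
  "vtx T2 i \<in> unit_edge t j \<longleftrightarrow> t \<in> {T12, T23} \<and> j = i"
  "vtx T3 i \<in> unit_edge t j \<longleftrightarrow> t \<in> {T23, T3C} \<and> j = i"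
  "vtx C i \<in> unit_edge t j \<longleftrightarrow> t \<in> {T3C, BC, CK} \<and> j = i"
  "vtx B i \<in> unit_edge t j \<longleftrightarrow> t \<in> {AB, BC, BB'} \<and> j = i"
  "vtx A' i \<in> unit_edge t j \<longleftrightarrow> t \<in> {KA', AB', AT'} \<and> j = i"
  "vtx T1' i \<in> unit_edge t j \<longleftrightarrow> t \<in> {AT', T12'} \<and> j = i"
  "vtx T2' i \<in> unit_edge t j \<longleftrightarrow> t \<in> {T12', T23'} \<and> j = i"
  "vtx T3' i \<in> unit_edge t j \<longleftrightarrow> t \<in> {T23', T3C'} \<and> j = i"
  "vtx C' i \<in> unit_edge t j \<longleftrightarrow> t \<in> {T3C', BC', CK'} \<and> j = i"
  "vtx B' i \<in> unit_edge t j \<longleftrightarrow> t \<in> {AB', BC', BB'} \<and> j = i"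
  by (induct t) auto

lemma pyrene_edges_at_subsetI:
  assumes "\<And>k. v \<in> rung k \<Longrightarrow> rung k \<in> S" "\<And>t j. 1 \<le> j \<Longrightarrow> v \<in> unit_edge t j \<Longrightarrow> unit_edge t j \<in> S"
  shows "{e \<in> pyrene_E n. v \<in> e} \<subseteq> S"
  using assms unfolding pyrene_E_iff by auto

lemma pyrene_edges_at:
  "{e \<in> pyrene_E n. vK k \<in> e} \<subseteq> {rung k, unit_edge CK k, unit_edge KA (Suc k)}"
  "{e \<in> pyrene_E n. vK' k \<in> e} \<subseteq> {rung k, unit_edge CK' k, unit_edge KA' (Suc k)}"
  "{e \<in> pyrene_E n. vtx A i \<in> e} \<subseteq> {unit_edge KA i, unit_edge AB i, unit_edge AT i}"
  "{e \<in> pyrene_E n. vtx T1 i \<in> e} \<subseteq> {unit_edge AT i, unit_edge T12 i}"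
  "{e \<in> pyrene_E n. vtx T2 i \<in> e} \<subseteq> {unit_edge T12 i, unit_edge T23 i}"
  "{e \<in> pyrene_E n. vtx T3 i \<in> e} \<subseteq> {unit_edge T23 i, unit_edge T3C i}"
  "{e \<in> pyrene_E n. vtx C i \<in> e} \<subseteq> {unit_edge T3C i, unit_edge BC i, unit_edge CK i}"
  "{e \<in> pyrene_E n. vtx B i \<in> e} \<subseteq> {unit_edge AB i, unit_edge BC i, unit_edge BB' i}"
  "{e \<in> pyrene_E n. vtx A' i \<in> e} \<subseteq> {unit_edge KA' i, unit_edge AB' i, unit_edge AT' i}"
  "{e \<in> pyrene_E n. vtx T1' i \<in> e} \<subseteq> {unit_edge AT' i, unit_edge T12' i}"
  "{e \<in> pyrene_E n. vtx T2' i \<in> e} \<subseteq> {unit_edge T12' i, unit_edge T23' i}"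
  "{e \<in> pyrene_E n. vtx T3' i \<in> e} \<subseteq> {unit_edge T23' i, unit_edge T3C' i}"
  "{e \<in> pyrene_E n. vtx C' i \<in> e} \<subseteq> {unit_edge T3C' i, unit_edge BC' i, unit_edge CK' i}"
  "{e \<in> pyrene_E n. vtx B' i \<in> e} \<subseteq> {unit_edge AB' i, unit_edge BC' i, unit_edge BB' i}"
  by (rule pyrene_edges_at_subsetI;
      auto simp del: unit_edge.simps simp: vK_in_unit_edge_iff vtx_in_unit_edge_iff rung_def)+

section \<open>Perfect matchings of \<open>H\<^sub>n\<close> as words\<close>

abbreviation pyrene_matchings :: "nat \<Rightarrow> vert set set set" where
  "pyrene_matchings n \<equiv> perfect_matchings (pyrene_V n) (pyrene_E n)"

definition rung_condition :: "vert set set \<Rightarrow> nat \<Rightarrow> bool" where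
  "rung_condition M k \<longleftrightarrow>
     exactly_one (rung k \<in> M) (unit_edge CK k \<in> M) (unit_edge KA (Suc k) \<in> M) \<and>
     exactly_one (rung k \<in> M) (unit_edge CK' k \<in> M) (unit_edge KA' (Suc k) \<in> M)"

definition unit_condition :: "vert set set \<Rightarrow> nat \<Rightarrow> bool" where
  "unit_condition M i \<longleftrightarrow>
     exactly_one (unit_edge KA i \<in> M) (unit_edge AB i \<in> M) (unit_edge AT i \<in> M) \<and>
     (unit_edge AT i \<in> M) \<noteq> (unit_edge T12 i \<in> M) \<and>
     (unit_edge T12 i \<in> M) \<noteq> (unit_edge T23 i \<in> M) \<and>
     (unit_edge T23 i \<in> M) \<noteq> (unit_edge T3C i \<in> M) \<and>
     exactly_one (unit_edge AB i \<in> M) (unit_edge BC i \<in> M) (unit_edge BB' i \<in> M) \<and>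
     exactly_one (unit_edge T3C i \<in> M) (unit_edge BC i \<in> M) (unit_edge CK i \<in> M) \<and>
     exactly_one (unit_edge KA' i \<in> M) (unit_edge AB' i \<in> M) (unit_edge AT' i \<in> M) \<and>
     (unit_edge AT' i \<in> M) \<noteq> (unit_edge T12' i \<in> M) \<and>
     (unit_edge T12' i \<in> M) \<noteq> (unit_edge T23' i \<in> M) \<and>
     (unit_edge T23' i \<in> M) \<noteq> (unit_edge T3C' i \<in> M) \<and>
     exactly_one (unit_edge AB' i \<in> M) (unit_edge BC' i \<in> M) (unit_edge BB' i \<in> M) \<and>
     exactly_one (unit_edge T3C' i \<in> M) (unit_edge BC' i \<in> M) (unit_edge CK' i \<in> M)"

lemma pyrene_perfect_matching_iff:
  assumes "M \<subseteq> pyrene_E n" "1 \<le> n"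
  shows "M \<in> pyrene_matchings n \<longleftrightarrow>
    (\<forall>k\<le>n. rung_condition M k) \<and> (\<forall>i\<in>{1..n}. unit_condition M i)"
proof -
  note deg3 = ex1_edge_at_iff_exactly_one[OF assms(1)]
    and deg2 = ex1_edge_at_iff_xor[OF assms(1)]
  have "M \<in> pyrene_matchings n \<longleftrightarrow> (\<forall>v\<in>pyrene_V n. \<exists>!e. e \<in> M \<and> v \<in> e)"
    using assms(1) unfolding perfect_matchings_def by blast
  also have "\<dots> \<longleftrightarrow> (\<forall>k\<le>n. rung_condition M k) \<and> (\<forall>i\<in>{1..n}. unit_condition M i)"
    unfolding pyrene_V_eq[OF assms(2)] rung_condition_def unit_condition_def
    by (simp add: UNIV_label ball_Un rung_def doubleton_eq_iff
        pyrene_edges_at(1-3,7-9,13-14)[THEN deg3] pyrene_edges_at(4-6,10-12)[THEN deg2];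
      simp only: Ball_def atMost_iff)
  finally show ?thesis .
qed

text \<open>A letter records how a unit of a perfect matching looks: \<open>LeftLink\<close> (\<open>RightLink\<close>) when both
  ends of the rung on its left (right) are matched into the unit, and \<open>Inner p q\<close> otherwise,
  where \<open>p\<close> (\<open>q\<close>) tells which of the two possible matchings of the upper (lower) half is used.\<close>

datatype letter = Inner bool bool | LeftLink | RightLink

fun letter_edge :: "letter \<Rightarrow> edge_kind \<Rightarrow> bool" where
  "letter_edge (Inner p q) t \<longleftrightarrow>
     t \<in> {AB, T12, T3C} \<and> p \<or> t \<in> {AT, T23, BC} \<and> \<not> p \<or>
     t \<in> {AB', T12', T3C'} \<and> q \<or> t \<in> {AT', T23', BC'} \<and> \<not> q"
| "letter_edge LeftLink t \<longleftrightarrow> t \<in> {KA, T12, T3C, KA', T12', T3C', BB'}"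
| "letter_edge RightLink t \<longleftrightarrow> t \<in> {CK, AT, T23, CK', AT', T23', BB'}"

definition letter_of :: "vert set set \<Rightarrow> nat \<Rightarrow> letter" where
  "letter_of M i =
     (if unit_edge KA i \<in> M then LeftLink else if unit_edge CK i \<in> M then RightLink
      else Inner (unit_edge AB i \<in> M) (unit_edge AB' i \<in> M))"

definition cut_condition :: "vert set set \<Rightarrow> nat \<Rightarrow> bool" where
  "cut_condition M k \<longleftrightarrow> rung k \<in> M \<or>
     unit_edge CK k \<in> M \<and> unit_edge CK' k \<in> M \<or>
     unit_edge KA (Suc k) \<in> M \<and> unit_edge KA' (Suc k) \<in> M"

lemma unit_propagation:
  assumes "rung_condition M k" "unit_condition M (Suc k)" "rung_condition M (Suc k)"
    and "cut_condition M k"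
  shows "cut_condition M (Suc k)"
    and "unit_edge t (Suc k) \<in> M \<longleftrightarrow> letter_edge (letter_of M (Suc k)) t"
proof -
  note conditions = assms[unfolded rung_condition_def unit_condition_def cut_condition_def
      exactly_one_def]
  show "cut_condition M (Suc k)"
    using conditions unfolding cut_condition_def by argo
  show "unit_edge t (Suc k) \<in> M \<longleftrightarrow> letter_edge (letter_of M (Suc k)) t"
    unfolding letter_of_def by ((insert conditions, cases t); simp del: unit_edge.simps; argo)
qed

lemma letter_edge_link_iff:
  "letter_edge l KA \<longleftrightarrow> l = LeftLink" "letter_edge l KA' \<longleftrightarrow> l = LeftLink"
  "letter_edge l CK \<longleftrightarrow> l = RightLink" "letter_edge l CK' \<longleftrightarrow> l = RightLink"
  by (cases l; simp)+

lemma letter_eqI: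
  assumes "\<And>t. letter_edge l t \<longleftrightarrow> letter_edge l' t"
  shows "l = l'"
  using assms[of KA] assms[of CK] assms[of AB] assms[of AB'] by (cases l; cases l') auto

lemma unit_edge_notin_pyrene_matching:
  assumes "M \<in> pyrene_matchings n" "i \<notin> {1..n}"
  shows "unit_edge t i \<notin> M"
  using assms perfect_matchings_subset unit_edge_in_pyrene_E_iff by fastforce

lemma pyrene_matching_conditions:
  assumes "M \<in> pyrene_matchings n" "1 \<le> n"
  shows "(\<forall>k\<le>n. rung_condition M k) \<and> (\<forall>i\<in>{1..n}. unit_condition M i)"
  using pyrene_perfect_matching_iff[OF perfect_matchings_subset[OF assms(1)] assms(2)] assms(1)
  by blast

lemma pyrene_matching_cut_condition:
  assumes M: "M \<in> pyrene_matchings n" and "1 \<le> n" "k \<le> n"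
  shows "cut_condition M k"
  using \<open>k \<le> n\<close>
proof (induction k)
  case 0
  have "unit_edge CK 0 \<notin> M" "unit_edge CK' 0 \<notin> M"
    using unit_edge_notin_pyrene_matching[OF M, where i = 0] by (simp_all del: unit_edge.simps)
  moreover have "rung_condition M 0"
    using pyrene_matching_conditions[OF M \<open>1 \<le> n\<close>] by simp
  ultimately show ?case
    unfolding rung_condition_def cut_condition_def exactly_one_def by blast
next
  case (Suc k)
  have "rung_condition M k" "unit_condition M (Suc k)" "rung_condition M (Suc k)"
    using pyrene_matching_conditions[OF M \<open>1 \<le> n\<close>] Suc.prems by auto
  then show ?case
    using Suc by (intro unit_propagation(1)) auto
qed

lemma pyrene_matching_unit_edge_iff:
  assumes M: "M \<in> pyrene_matchings n" and "i \<in> {1..n}"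
  shows "unit_edge t i \<in> M \<longleftrightarrow> letter_edge (letter_of M i) t"
proof -
  obtain k where k: "i = Suc k" "k < n"
    using \<open>i \<in> {1..n}\<close> by (cases i) auto
  moreover have "rung_condition M k" "unit_condition M (Suc k)" "rung_condition M (Suc k)"
    using pyrene_matching_conditions[OF M] k by auto
  ultimately show ?thesis
    using unit_propagation(2) pyrene_matching_cut_condition[OF M, of k] by simp
qed

lemma pyrene_matching_letter_of_iff:
  assumes "M \<in> pyrene_matchings n" "i \<in> {1..n}"
  shows "letter_of M i = LeftLink \<longleftrightarrow> unit_edge KA i \<in> M"
    and "letter_of M i = RightLink \<longleftrightarrow> unit_edge CK i \<in> M"
  by (simp_all only: pyrene_matching_unit_edge_iff[OF assms] letter_edge_link_iff)

text \<open>Units are numbered from \<open>1\<close>, list positions from \<open>0\<close>.\<close>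

definition letter_at :: "letter list \<Rightarrow> nat \<Rightarrow> letter" where
  "letter_at w i = w ! (i - 1)"

definition rung_in :: "letter list \<Rightarrow> nat \<Rightarrow> bool" where
  "rung_in w k \<longleftrightarrow>
     \<not> (k \<in> {1..length w} \<and> letter_at w k = RightLink) \<and>
     \<not> (Suc k \<in> {1..length w} \<and> letter_at w (Suc k) = LeftLink)"

definition matching_of :: "letter list \<Rightarrow> vert set set" where
  "matching_of w = {rung k | k. k \<le> length w \<and> rung_in w k} \<union>
     {unit_edge t i | t i. i \<in> {1..length w} \<and> letter_edge (letter_at w i) t}"

definition starts_left :: "letter list \<Rightarrow> bool" where
  "starts_left w \<longleftrightarrow> w \<noteq> [] \<and> hd w = LeftLink"

fun admissible :: "letter list \<Rightarrow> bool" where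
  "admissible [] \<longleftrightarrow> True"
| "admissible (x # w) \<longleftrightarrow> admissible w \<and> \<not> (x = RightLink \<and> starts_left w)"

lemma admissible_iff_nth:
  "admissible w \<longleftrightarrow> (\<forall>j. Suc j < length w \<longrightarrow> \<not> (w ! j = RightLink \<and> w ! Suc j = LeftLink))"
proof (induction w)
  case (Cons x w)
  then show ?case
    by (cases w) (auto simp: starts_left_def All_less_Suc2)
qed simp

lemma rung_in_matching_of_iff: "rung k \<in> matching_of w \<longleftrightarrow> k \<le> length w \<and> rung_in w k"
  unfolding matching_of_def by (auto simp del: unit_edge.simps simp: edge_eq_simps)

lemma unit_edge_in_matching_of_iff:
  "unit_edge t i \<in> matching_of w \<longleftrightarrow> i \<in> {1..length w} \<and> letter_edge (letter_at w i) t"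
  unfolding matching_of_def by (auto simp del: unit_edge.simps simp: edge_eq_simps)

lemma admissible_letter_at:
  assumes "admissible w" "1 \<le> k" "k < length w"
  shows "\<not> (letter_at w k = RightLink \<and> letter_at w (Suc k) = LeftLink)"
  using assms(1)[unfolded admissible_iff_nth, rule_format, of "k - 1"] assms(2,3)
  by (simp add: letter_at_def)

lemma matching_of_conditions:
  assumes "admissible w"
  shows "(\<forall>k\<le>length w. rung_condition (matching_of w) k) \<and>
    (\<forall>i\<in>{1..length w}. unit_condition (matching_of w) i)"
proof (intro conjI ballI allI impI)
  fix k assume "k \<le> length w"
  then show "rung_condition (matching_of w) k"
    using admissible_letter_at[OF assms, of k]
    unfolding rung_condition_def exactly_one_def
    by (auto simp del: unit_edge.simps
        simp: rung_in_matching_of_iff unit_edge_in_matching_of_iff letter_edge_link_iff rung_in_def)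
next
  fix i assume "i \<in> {1..length w}"
  then show "unit_condition (matching_of w) i"
    unfolding unit_condition_def exactly_one_def
    by (cases "letter_at w i") (simp_all del: unit_edge.simps add: unit_edge_in_matching_of_iff)
qed

lemma matching_of_subset: "w \<noteq> [] \<Longrightarrow> matching_of w \<subseteq> pyrene_E (length w)"
  unfolding matching_of_def
  by (auto simp del: unit_edge.simps simp: unit_edge_in_pyrene_E_iff Suc_le_eq
      intro!: rung_in_pyrene_E)

lemma matching_of_perfect:
  assumes "admissible w" "w \<noteq> []"
  shows "matching_of w \<in> pyrene_matchings (length w)"
proof -
  have "1 \<le> length w"
    using assms(2) by (simp add: Suc_le_eq)
  then show ?thesis
    using pyrene_perfect_matching_iff[OF matching_of_subset[OF assms(2)]]
      matching_of_conditions[OF assms(1)] by blast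
qed

definition word_of :: "vert set set \<Rightarrow> nat \<Rightarrow> letter list" where
  "word_of M n = map (letter_of M) [1..<Suc n]"

lemma length_word_of [simp]: "length (word_of M n) = n"
  by (simp add: word_of_def)

lemma nth_word_of: "j < n \<Longrightarrow> word_of M n ! j = letter_of M (Suc j)"
  by (simp add: word_of_def del: upt_Suc)

lemma letter_at_word_of: "i \<in> {1..n} \<Longrightarrow> letter_at (word_of M n) i = letter_of M i"
  by (cases i) (simp_all add: letter_at_def nth_word_of)

lemma word_of_admissible:
  assumes M: "M \<in> pyrene_matchings n" and "1 \<le> n"
  shows "admissible (word_of M n)"
  unfolding admissible_iff_nth
proof (intro allI impI notI)
  fix j assume "Suc j < length (word_of M n)"
    and "word_of M n ! j = RightLink \<and> word_of M n ! Suc j = LeftLink"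
  then have "unit_edge CK (Suc j) \<in> M" "unit_edge KA (Suc (Suc j)) \<in> M"
    using pyrene_matching_letter_of_iff[OF M] by (simp_all add: nth_word_of)
  moreover have "rung_condition M (Suc j)"
    using pyrene_matching_conditions[OF M \<open>1 \<le> n\<close>] \<open>Suc j < length (word_of M n)\<close> by simp
  ultimately show False
    unfolding rung_condition_def exactly_one_def by blast
qed

lemma matching_of_word_of:
  assumes M: "M \<in> pyrene_matchings n" and "1 \<le> n"
  shows "matching_of (word_of M n) = M"
proof -
  have unit_edge_iff: "unit_edge t i \<in> M \<longleftrightarrow> unit_edge t i \<in> matching_of (word_of M n)" for t i
    using pyrene_matching_unit_edge_iff[OF M] unit_edge_notin_pyrene_matching[OF M]
    by (cases "i \<in> {1..n}")
      (auto simp del: unit_edge.simps simp: unit_edge_in_matching_of_iff letter_at_word_of)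
  have rung_iff: "rung k \<in> M \<longleftrightarrow> rung k \<in> matching_of (word_of M n)" if "k \<le> n" for k
  proof -
    have "exactly_one (rung k \<in> M) (unit_edge CK k \<in> M) (unit_edge KA (Suc k) \<in> M)"
      using pyrene_matching_conditions[OF M \<open>1 \<le> n\<close>] that unfolding rung_condition_def by blast
    then show ?thesis
      using that unfolding unit_edge_iff
      by (auto simp del: unit_edge.simps simp: exactly_one_def rung_in_matching_of_iff rung_in_def
          unit_edge_in_matching_of_iff letter_edge_link_iff)
  qed
  show ?thesis
  proof (intro set_eqI iffI)
    fix e assume "e \<in> M"
    then have "e \<in> pyrene_E n"
      using perfect_matchings_subset[OF M] by blast
    then show "e \<in> matching_of (word_of M n)"
      using \<open>e \<in> M\<close> rung_iff unit_edge_iff unfolding pyrene_E_eq'[OF \<open>1 \<le> n\<close>] by blast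
  next
    fix e assume "e \<in> matching_of (word_of M n)"
    then show "e \<in> M"
      using rung_iff unit_edge_iff unfolding matching_of_def by auto
  qed
qed

lemma matching_of_inj:
  assumes "length v = length w" "matching_of v = matching_of w"
  shows "v = w"
proof (rule nth_equalityI)
  fix j assume "j < length v"
  then have "letter_edge (letter_at v (Suc j)) t \<longleftrightarrow> letter_edge (letter_at w (Suc j)) t" for t
    using assms unit_edge_in_matching_of_iff[of t "Suc j" v] unit_edge_in_matching_of_iff[of t "Suc j" w]
    by auto
  then show "v ! j = w ! j"
    using letter_eqI by (simp add: letter_at_def)
qed (rule assms(1))

definition words :: "nat \<Rightarrow> letter list set" where
  "words n = {w. length w = n \<and> admissible w}"

theorem bij_betw_matching_of:
  assumes "1 \<le> n"
  shows "bij_betw matching_of (words n) (pyrene_matchings n)"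
  unfolding bij_betw_def
proof
  show "inj_on matching_of (words n)"
    unfolding words_def by (intro inj_onI matching_of_inj) auto
  show "matching_of ` words n = pyrene_matchings n"
  proof (intro set_eqI iffI)
    fix M assume "M \<in> matching_of ` words n"
    then show "M \<in> pyrene_matchings n"
      using assms matching_of_perfect unfolding words_def by fastforce
  next
    fix M assume M: "M \<in> pyrene_matchings n"
    then have "word_of M n \<in> words n"
      using word_of_admissible assms unfolding words_def by simp
    then show "M \<in> matching_of ` words n"
      using matching_of_word_of[OF M assms] by (metis image_eqI)
  qed
qed

section \<open>Forcing numbers\<close>

fun key_edge :: "letter \<Rightarrow> edge_kind \<Rightarrow> bool" where
  "key_edge (Inner p q) t \<longleftrightarrow> t = (if p then AB else BC) \<or> t = (if q then AB' else BC')"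
| "key_edge LeftLink t \<longleftrightarrow> t = KA"
| "key_edge RightLink t \<longleftrightarrow> t = CK"

fun letter_weight :: "letter \<Rightarrow> nat" where
  "letter_weight (Inner p q) = 2"
| "letter_weight LeftLink = 1"
| "letter_weight RightLink = 1"

definition word_weight :: "letter list \<Rightarrow> nat" where
  "word_weight w = (\<Sum>l\<leftarrow>w. letter_weight l)"

lemma key_edge_letter_edge: "key_edge l t \<Longrightarrow> letter_edge l t"
  by (cases l) (auto split: if_splits)

lemma letter_eq_if_key_edges:
  assumes "\<And>t. key_edge l t \<Longrightarrow> letter_edge l' t"
  shows "l = l'"
proof (cases l)
  case (Inner p q)
  then show ?thesis
    using assms[of "if p then AB else BC"] assms[of "if q then AB' else BC'"]
    by (cases l'; cases p; cases q) auto
qed (use assms[of KA] assms[of CK] in \<open>cases l'; auto\<close>)+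

lemma card_key_edge: "card {t. key_edge l t} = letter_weight l"
proof (cases l)
  case (Inner p q)
  then have "{t. key_edge l t} = {if p then AB else BC, if q then AB' else BC'}"
    by auto
  then show ?thesis
    using Inner by simp
qed simp_all

definition key_positions :: "letter list \<Rightarrow> (nat \<times> edge_kind) set" where
  "key_positions w = (SIGMA i:{1..length w}. {t. key_edge (letter_at w i) t})"

definition key_edges :: "letter list \<Rightarrow> vert set set" where
  "key_edges w = (\<lambda>(i, t). unit_edge t i) ` key_positions w"

lemma card_key_positions: "card (key_positions w) = word_weight w"
proof -
  have "finite {t. key_edge l t}" for l
    by (cases l) auto
  then have "card (key_positions w) = (\<Sum>i=1..length w. letter_weight (letter_at w i))"
    unfolding key_positions_def by (simp add: card_SigmaI card_key_edge)
  also have "\<dots> = (\<Sum>j<length w. letter_weight (w ! j))"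
    by (rule sum.reindex_bij_witness[of _ Suc "\<lambda>i. i - 1"]) (auto simp: letter_at_def)
  also have "\<dots> = word_weight w"
    by (simp add: word_weight_def sum_list_sum_nth atLeast0LessThan)
  finally show ?thesis .
qed

lemma card_key_edges: "card (key_edges w) = word_weight w"
proof -
  have "inj_on (\<lambda>(i, t). unit_edge t i) (key_positions w)"
    by (auto simp: inj_on_def unit_edge_eq_iff)
  then show ?thesis
    unfolding key_edges_def card_key_positions[symmetric] by (rule card_image)
qed

lemma key_edges_forcing_set:
  assumes "admissible w" "w \<noteq> []"
  shows "forcing_set (pyrene_V (length w)) (pyrene_E (length w)) (matching_of w) (key_edges w)"
  unfolding forcing_set_def
proof (intro conjI ballI impI)
  show "key_edges w \<subseteq> matching_of w"
    unfolding key_edges_def key_positions_def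
    by (auto simp del: unit_edge.simps simp: unit_edge_in_matching_of_iff key_edge_letter_edge)
  fix M assume M: "M \<in> pyrene_matchings (length w)" and "key_edges w \<subseteq> M"
  have "1 \<le> length w"
    using assms(2) by (simp add: Suc_le_eq)
  then obtain v where v: "v \<in> words (length w)" "M = matching_of v"
    using bij_betw_matching_of M unfolding bij_betw_def by blast
  have "v = w"
  proof (rule nth_equalityI)
    show "length v = length w"
      using v(1) unfolding words_def by simp
    fix j assume "j < length v"
    have "letter_at w (Suc j) = letter_at v (Suc j)"
    proof (rule letter_eq_if_key_edges)
      fix t assume "key_edge (letter_at w (Suc j)) t"
      then have "unit_edge t (Suc j) \<in> matching_of v"
        using \<open>key_edges w \<subseteq> M\<close> \<open>j < length v\<close> \<open>length v = length w\<close> v(2)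
        unfolding key_edges_def key_positions_def by force
      then show "letter_edge (letter_at v (Suc j)) t"
        by (simp del: unit_edge.simps add: unit_edge_in_matching_of_iff)
    qed
    then show "v ! j = w ! j"
      by (simp add: letter_at_def)
  qed
  then show "M = matching_of w"
    using v(2) by simp
qed

fun flip_letter :: "edge_kind \<Rightarrow> letter \<Rightarrow> letter" where
  "flip_letter t (Inner p q) = (if t \<in> {AB, BC} then Inner (\<not> p) q else Inner p (\<not> q))"
| "flip_letter t LeftLink = Inner True True"
| "flip_letter t RightLink = Inner False False"

lemma flip_letter_neq: "flip_letter t l \<noteq> l"
  by (cases l) auto

lemma flip_letter_Inner: "\<exists>p q. flip_letter t l = Inner p q"
  by (cases l) auto

text \<open>The two flips of an \<open>Inner\<close> letter change the upper and the lower half of the unit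
  respectively, so they remove disjoint sets of edges.\<close>

lemma flip_letter_removed_disjoint:
  assumes "key_edge l t" "key_edge l t'" "t \<noteq> t'"
    and "letter_edge l u" "\<not> letter_edge (flip_letter t l) u"
  shows "letter_edge (flip_letter t' l) u"
  using assms by (cases l) (auto split: if_splits)

lemma letter_at_update:
  assumes "i \<in> {1..length w}" "1 \<le> j"
  shows "letter_at (w[i - 1 := x]) j = (if j = i then x else letter_at w j)"
  using assms by (auto simp: letter_at_def nth_list_update)

lemma admissible_update_Inner: "admissible w \<Longrightarrow> admissible (w[j := Inner p q])"
  unfolding admissible_iff_nth by (cases "j < length w") (auto simp: nth_list_update)

lemma matching_of_update_Inner_diff:
  assumes "i \<in> {1..length w}"
    and "e \<in> matching_of w" "e \<notin> matching_of (w[i - 1 := Inner p q])"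
  shows "\<exists>u. e = unit_edge u i \<and> letter_edge (letter_at w i) u \<and> \<not> letter_edge (Inner p q) u"
proof -
  let ?v = "w[i - 1 := Inner p q]"
  have at: "letter_at ?v j = (if j = i then Inner p q else letter_at w j)" if "1 \<le> j" for j
    using letter_at_update[OF assms(1) that] .
  from assms(2) consider k where "e = rung k" "k \<le> length w" "rung_in w k"
    | u j where "e = unit_edge u j" "j \<in> {1..length w}" "letter_edge (letter_at w j) u"
    unfolding matching_of_def by blast
  then show ?thesis
  proof cases
    case 1
    then have "rung_in ?v k"
      using at unfolding rung_in_def by auto
    then show ?thesis
      using 1 assms(3) by (simp add: rung_in_matching_of_iff)
  next
    case 2
    then show ?thesis
      using assms(3) at
      by (auto simp del: unit_edge.simps simp: unit_edge_in_matching_of_iff split: if_splits)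
  qed
qed

lemma finite_matching_of: "w \<noteq> [] \<Longrightarrow> finite (matching_of w)"
  using matching_of_subset finite_pyrene_E by (rule finite_subset)

definition flip_at :: "letter list \<Rightarrow> nat \<times> edge_kind \<Rightarrow> letter list" where
  "flip_at w = (\<lambda>(i, t). w[i - 1 := flip_letter t (letter_at w i)])"

lemma flip_at_Inner: "\<exists>p q. flip_at w (i, t) = w[i - 1 := Inner p q]"
  using flip_letter_Inner unfolding flip_at_def by (metis case_prod_conv)

lemma flip_at_perfect:
  assumes "admissible w" "w \<noteq> []"
  shows "matching_of (flip_at w j) \<in> pyrene_matchings (length w)"
proof -
  obtain i t p q where "j = (i, t)" "flip_at w j = w[i - 1 := Inner p q]"
    using flip_at_Inner by (metis prod.exhaust)
  then show ?thesis
    using matching_of_perfect[of "flip_at w j"] assms admissible_update_Inner by auto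
qed

lemma flip_at_neq:
  assumes "j \<in> key_positions w"
  shows "matching_of (flip_at w j) \<noteq> matching_of w"
proof
  obtain i t where j: "j = (i, t)" "i \<in> {1..length w}"
    using assms unfolding key_positions_def by blast
  assume "matching_of (flip_at w j) = matching_of w"
  then have "flip_at w j = w"
    by (rule matching_of_inj[rotated]) (simp add: flip_at_def j)
  then have "flip_at w j ! (i - 1) = letter_at w i"
    by (simp add: letter_at_def)
  moreover have "flip_at w j ! (i - 1) = flip_letter t (letter_at w i)"
    using j by (auto simp: flip_at_def)
  ultimately show False
    using flip_letter_neq by metis
qed

lemma flip_at_disjoint:
  "disjoint_family_on (\<lambda>j. matching_of w - matching_of (flip_at w j)) (key_positions w)"
  unfolding disjoint_family_on_def
proof (intro ballI impI)
  fix j j' assume j: "j \<in> key_positions w" and j': "j' \<in> key_positions w" and "j \<noteq> j'"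
  obtain i t where it: "j = (i, t)" "i \<in> {1..length w}" "key_edge (letter_at w i) t"
    using j unfolding key_positions_def by blast
  obtain i' t' where it': "j' = (i', t')" "i' \<in> {1..length w}" "key_edge (letter_at w i') t'"
    using j' unfolding key_positions_def by blast
  obtain p q p' q' where pq: "flip_letter t (letter_at w i) = Inner p q"
    "flip_letter t' (letter_at w i') = Inner p' q'"
    using flip_letter_Inner by metis
  show "(matching_of w - matching_of (flip_at w j)) \<inter>
      (matching_of w - matching_of (flip_at w j')) = {}"
  proof (rule equals0I, elim IntE DiffE)
    fix e assume e: "e \<in> matching_of w" "e \<notin> matching_of (flip_at w j)"
      "e \<notin> matching_of (flip_at w j')"
    obtain u where u: "e = unit_edge u i" "letter_edge (letter_at w i) u"
      "\<not> letter_edge (Inner p q) u"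
      using matching_of_update_Inner_diff[OF it(2) e(1)] e(2) pq(1)
      unfolding flip_at_def it(1) by auto
    obtain u' where u': "e = unit_edge u' i'" "\<not> letter_edge (Inner p' q') u'"
      using matching_of_update_Inner_diff[OF it'(2) e(1)] e(3) pq(2)
      unfolding flip_at_def it'(1) by auto
    have "u' = u" "i' = i"
      using u(1) u'(1) unit_edge_eq_iff by auto
    then have "key_edge (letter_at w i) t'" "t \<noteq> t'"
      "\<not> letter_edge (flip_letter t' (letter_at w i)) u"
      using it'(3) \<open>j \<noteq> j'\<close> it(1) it'(1) pq(2) u'(2) by auto
    then show False
      using flip_letter_removed_disjoint[OF it(3) _ _ u(2)] pq(1) u(3) by auto
  qed
qed

theorem forcing_number_matching_of:
  assumes "admissible w" "w \<noteq> []"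
  shows "forcing_number (pyrene_V (length w)) (pyrene_E (length w)) (matching_of w) = word_weight w"
proof (rule forcing_number_eqI[OF finite_matching_of[OF assms(2)] key_edges_forcing_set[OF assms],
      unfolded card_key_edges])
  fix S assume "forcing_set (pyrene_V (length w)) (pyrene_E (length w)) (matching_of w) S"
  from forcing_set_card_ge[OF this finite_matching_of[OF assms(2)] flip_at_perfect[OF assms]
      flip_at_neq flip_at_disjoint]
  show "word_weight w \<le> card S"
    unfolding card_key_positions .
qed

section \<open>Counting words\<close>

lemma UNIV_letter:
  "(UNIV :: letter set) =
     {Inner True True, Inner True False, Inner False True, Inner False False, LeftLink, RightLink}"
proof (rule UNIV_eq_I)
  fix l :: letter
  show "l \<in>
      {Inner True True, Inner True False, Inner False True, Inner False False, LeftLink, RightLink}"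
    by (cases l) auto
qed

lemma finite_words: "finite (words n)"
proof (rule finite_subset)
  show "words n \<subseteq> {w. set w \<subseteq> UNIV \<and> length w = n}"
    unfolding words_def by blast
  show "finite {w. set w \<subseteq> (UNIV :: letter set) \<and> length w = n}"
    by (rule finite_lists_length_eq) (simp add: UNIV_letter)
qed

definition left_words :: "nat \<Rightarrow> letter list set" where
  "left_words n = {w \<in> words n. starts_left w}"

lemma sum_words_Suc:
  fixes g :: "letter list \<Rightarrow> 'a::ab_group_add"
  shows "(\<Sum>w\<in>words (Suc n). g w) =
    (\<Sum>x\<in>UNIV. \<Sum>w\<in>words n. g (x # w)) - (\<Sum>w\<in>left_words n. g (RightLink # w))"
proof -
  define R where "R x = {w \<in> words n. \<not> (x = RightLink \<and> starts_left w)}" for x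
  have "words (Suc n) = (\<lambda>(x, w). x # w) ` Sigma UNIV R"
    unfolding words_def R_def by (auto simp: length_Suc_conv)
  moreover have "inj_on (\<lambda>(x, w). x # w) (Sigma UNIV R)"
    by (auto simp: inj_on_def)
  ultimately have "(\<Sum>w\<in>words (Suc n). g w) = (\<Sum>(x, w)\<in>Sigma UNIV R. g (x # w))"
    by (simp add: sum.reindex case_prod_unfold)
  also have "\<dots> = (\<Sum>x\<in>UNIV. \<Sum>w\<in>R x. g (x # w))"
    using finite_words by (subst sum.Sigma) (auto simp: R_def UNIV_letter)
  also have "\<dots> = (\<Sum>x\<in>UNIV. (\<Sum>w\<in>words n. g (x # w)) -
      (if x = RightLink then \<Sum>w\<in>left_words n. g (RightLink # w) else 0))"
  proof (rule sum.cong)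
    fix x :: letter
    have "R x = words n - (if x = RightLink then left_words n else {})"
      unfolding R_def left_words_def by auto
    then show "(\<Sum>w\<in>R x. g (x # w)) = (\<Sum>w\<in>words n. g (x # w)) -
        (if x = RightLink then \<Sum>w\<in>left_words n. g (RightLink # w) else 0)"
      using finite_words by (simp add: sum_diff left_words_def)
  qed simp
  also have "\<dots> = (\<Sum>x\<in>UNIV. \<Sum>w\<in>words n. g (x # w)) - (\<Sum>w\<in>left_words n. g (RightLink # w))"
    by (simp add: sum_subtractf UNIV_letter)
  finally show ?thesis .
qed

lemma sum_left_words_Suc: "(\<Sum>w\<in>left_words (Suc n). g w) = (\<Sum>w\<in>words n. g (LeftLink # w))"
proof -
  have "left_words (Suc n) = (\<lambda>w. LeftLink # w) ` words n"
    unfolding left_words_def words_def starts_left_def by (auto simp: length_Suc_conv)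
  then show ?thesis
    by (simp add: sum.reindex)
qed

definition num_words :: "nat \<Rightarrow> real" where
  "num_words n = card (words n)"

definition num_left_words :: "nat \<Rightarrow> real" where
  "num_left_words n = card (left_words n)"

definition total_weight :: "nat \<Rightarrow> real" where
  "total_weight n = (\<Sum>w\<in>words n. word_weight w)"

definition left_weight :: "nat \<Rightarrow> real" where
  "left_weight n = (\<Sum>w\<in>left_words n. word_weight w)"

lemma word_weight_Cons [simp]: "word_weight (x # w) = letter_weight x + word_weight w"
  by (simp add: word_weight_def)

lemma words_0: "words 0 = {[]}"
  by (auto simp: words_def)

lemma num_words_0: "num_words 0 = 1"
  by (simp add: num_words_def words_0)

lemma num_left_words_0: "num_left_words 0 = 0"
  by (simp add: num_left_words_def left_words_def words_0 starts_left_def)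

lemma num_words_pos: "num_words n > 0"
proof -
  have "admissible (replicate n (Inner True True))"
    by (induction n) (simp_all add: starts_left_def)
  then have "replicate n (Inner True True) \<in> words n"
    unfolding words_def by simp
  then show ?thesis
    using finite_words unfolding num_words_def by (auto simp: card_gt_0_iff)
qed

lemma num_words_Suc: "num_words (Suc n) = 6 * num_words n - num_left_words n"
  using sum_words_Suc[of "\<lambda>_. 1 :: real" n]
  by (simp add: num_words_def num_left_words_def UNIV_letter)

lemma num_left_words_Suc: "num_left_words (Suc n) = num_words n"
  using sum_left_words_Suc[of "\<lambda>_. 1 :: real" n]
  by (simp add: num_words_def num_left_words_def)

lemma total_weight_Suc:
  "total_weight (Suc n) = 10 * num_words n - num_left_words n + 6 * total_weight n - left_weight n"
  using sum_words_Suc[of "\<lambda>w. real (word_weight w)" n]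
  by (simp add: total_weight_def left_weight_def num_words_def num_left_words_def UNIV_letter
      sum.distrib left_words_def[symmetric])

lemma left_weight_Suc: "left_weight (Suc n) = num_words n + total_weight n"
  using sum_left_words_Suc[of "\<lambda>w. real (word_weight w)" n]
  by (simp add: total_weight_def left_weight_def num_words_def sum.distrib)

lemma num_words_rec: "num_words (Suc (Suc n)) = 6 * num_words (Suc n) - num_words n"
  by (simp add: num_words_Suc num_left_words_Suc)

lemma total_weight_rec:
  "total_weight (Suc (Suc n)) =
     6 * total_weight (Suc n) - total_weight n + 10 * num_words (Suc n) - 2 * num_words n"
  by (simp add: total_weight_Suc[of "Suc n"] num_left_words_Suc left_weight_Suc)

lemma Phi_pyrene: "1 \<le> n \<Longrightarrow> real (Phi (pyrene_V n) (pyrene_E n)) = num_words n"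
  unfolding Phi_def num_words_def using bij_betw_same_card[OF bij_betw_matching_of] by simp

lemma IDF_pyrene: "1 \<le> n \<Longrightarrow> real (IDF (pyrene_V n) (pyrene_E n)) = total_weight n"
proof -
  assume "1 \<le> n"
  have "IDF (pyrene_V n) (pyrene_E n) =
      (\<Sum>w\<in>words n. forcing_number (pyrene_V n) (pyrene_E n) (matching_of w))"
    unfolding IDF_def by (rule sum.reindex_bij_betw[OF bij_betw_matching_of[OF \<open>1 \<le> n\<close>], symmetric])
  also have "\<dots> = (\<Sum>w\<in>words n. word_weight w)"
  proof (rule sum.cong)
    fix w assume "w \<in> words n"
    then have "admissible w" "length w = n" "w \<noteq> []"
      using \<open>1 \<le> n\<close> unfolding words_def by auto
    then show "forcing_number (pyrene_V n) (pyrene_E n) (matching_of w) = word_weight w"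
      using forcing_number_matching_of by blast
  qed simp
  finally show ?thesis
    unfolding total_weight_def by simp
qed

section \<open>Asymptotics\<close>

lemma characteristic_roots:
  "(3 + 2 * sqrt 2) + (3 - 2 * sqrt 2) = (6 :: real)"
  "(3 + 2 * sqrt 2) * (3 - 2 * sqrt 2) = (1 :: real)"
  "\<bar>3 - 2 * sqrt 2\<bar> < (3 + 2 * sqrt 2 :: real)"
proof -
  have "sqrt 2 < 3 / 2"
    by (rule real_less_lsqrt) (simp_all add: power2_eq_square)
  then show "\<bar>3 - 2 * sqrt 2\<bar> < (3 + 2 * sqrt 2 :: real)"
    by simp
qed (simp_all add: algebra_simps)

lemma num_words_normalized_tendsto:
  "(\<lambda>n. num_words n / (3 + 2 * sqrt 2) ^ n) \<longlonglongrightarrow> (3 + 2 * sqrt 2) / (4 * sqrt 2)"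
proof -
  have "(\<lambda>n. num_words n / (3 + 2 * sqrt 2) ^ n) \<longlonglongrightarrow>
      (num_words 1 - (3 - 2 * sqrt 2) * num_words 0) / ((3 + 2 * sqrt 2) - (3 - 2 * sqrt 2))"
    by (rule linear_recurrence_tendsto) (simp_all only: characteristic_roots num_words_rec)
  then show ?thesis
    by (simp add: num_words_Suc[of 0] num_words_0 num_left_words_0)
qed

text \<open>\<open>n (a\<^sub>n + a\<^sub>n\<^sub>+\<^sub>1) / 4\<close> is a particular solution of the inhomogeneous recurrence
  of \<open>total_weight\<close>, so the remainder satisfies the homogeneous one.\<close>

definition weight_remainder :: "nat \<Rightarrow> real" where
  "weight_remainder n = total_weight n - real n * (num_words n + num_words (Suc n)) / 4"

lemma weight_remainder_rec:
  "weight_remainder (Suc (Suc n)) = 6 * weight_remainder (Suc n) - weight_remainder n"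
  unfolding weight_remainder_def total_weight_rec num_words_rec[of "Suc n"] num_words_rec[of n]
  by (simp add: field_simps)

lemma weight_remainder_normalized_convergent:
  "convergent (\<lambda>n. weight_remainder n / (3 + 2 * sqrt 2) ^ n)"
  by (rule convergentI, rule linear_recurrence_tendsto[where m = "3 - 2 * sqrt 2"])
    (simp_all only: characteristic_roots weight_remainder_rec)

lemma weight_ratio_tendsto: "(\<lambda>n. total_weight n / (real n * num_words n)) \<longlonglongrightarrow> 1 + sqrt 2 / 2"
proof -
  define l :: real where "l = 3 + 2 * sqrt 2"
  define \<alpha> :: real where "\<alpha> = (3 + 2 * sqrt 2) / (4 * sqrt 2)"
  define f where "f n = (1 + num_words (Suc n) / num_words n) / 4 +
    weight_remainder n / l ^ n * inverse (real n) / (num_words n / l ^ n)" for n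
  have "l > 0" "\<alpha> > 0"
    unfolding l_def \<alpha>_def by (simp_all add: add_pos_nonneg)
  obtain c where remainder_lim: "(\<lambda>n. weight_remainder n / l ^ n) \<longlonglongrightarrow> c"
    using weight_remainder_normalized_convergent unfolding l_def convergent_def by blast
  have num_words_lim: "(\<lambda>n. num_words n / l ^ n) \<longlonglongrightarrow> \<alpha>"
    using num_words_normalized_tendsto unfolding l_def \<alpha>_def .
  have ratio_lim: "(\<lambda>n. num_words (Suc n) / num_words n) \<longlonglongrightarrow> l"
    using num_words_lim \<open>\<alpha> > 0\<close> \<open>l > 0\<close> by (intro ratio_tendsto_if_normalized_tendsto) auto
  have lim: "f \<longlonglongrightarrow> (1 + l) / 4 + c * 0 / \<alpha>"
    unfolding f_def using ratio_lim remainder_lim num_words_lim \<open>\<alpha> > 0\<close>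
    by (intro tendsto_intros lim_inverse_n) auto
  have limit_value: "(1 + l) / 4 + c * 0 / \<alpha> = 1 + sqrt 2 / 2"
    unfolding l_def by simp
  have "\<forall>\<^sub>F n in sequentially. f n = total_weight n / (real n * num_words n)"
  proof (rule eventually_sequentiallyI[of 1])
    fix n :: nat assume "1 \<le> n"
    then show "f n = total_weight n / (real n * num_words n)"
      using num_words_pos[of n] \<open>l > 0\<close> by (simp add: f_def weight_remainder_def field_simps)
  qed
  from Lim_transform_eventually[OF lim this] show ?thesis
    unfolding limit_value .
qed

theorem corollary3p5:
  shows "(\<lambda>n. real (IDF (pyrene_V n) (pyrene_E n)) /
              (real n * real (Phi (pyrene_V n) (pyrene_E n))))
         \<longlonglongrightarrow> 1 + sqrt 2 / 2"
proof -
  have "\<forall>\<^sub>F n in sequentially. total_weight n / (real n * num_words n) =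
      real (IDF (pyrene_V n) (pyrene_E n)) / (real n * real (Phi (pyrene_V n) (pyrene_E n)))"
    by (rule eventually_sequentiallyI[of 1]) (simp add: IDF_pyrene Phi_pyrene)
  with weight_ratio_tendsto show ?thesis
    by (rule Lim_transform_eventually)
qed

end
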